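(* Let $V=\{v_1,\dots,v_k\}\subset\mathcal{V}_{\mathbb{T}}$, $\kappa\in\{-1,+1\}$, $E=\{e_1,\dots,e_\ell\}\subset\mathcal{E}_{\mathbb{T}}$ (possibly empty), and $s_1,\dots,s_\ell,g_1,\dots,g_\ell\in\{0,1\}$ with $g_i\ge s_i$ for all $i$. Let $I=\bigcap_{i=1}^k\{\sigma(v_i)=\kappa\}$, $A_s=\bigcap_{j=1}^\ell\{\eta(e_j)=s_j\}$, $A_g=\bigcap_{j=1}^\ell\{\eta(e_j)=g_j\}$ (with $A_s=A_g$ the whole space if $E=\emptyset$). Then for every $e\in\mathcal{E}_{\mathbb{T}}\setminus E$, $$\mathbb{P}_{\beta,r}(\eta(e)=1\mid A_g,I)\ge \mathbb{P}_{\beta,r}(\eta(e)=1\mid A_s).$$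
   Context: $\mathbb{T}$ is the triangular lattice with vertex set $\mathcal{V}_{\mathbb{T}}$ and edge set $\mathcal{E}_{\mathbb{T}}$; $\beta_c$ is the critical inverse temperature of the zero-field Ising model on $\mathbb{T}$. Throughout $\beta<\beta_c$, $p=1-e^{-\beta}$, $r\in[0,1]$, and $\nu_{p,2}$ is the (unique) Fortuin–Kasteleyn random-cluster measure on $\{0,1\}^{\mathcal{E}_{\mathbb{T}}}$ with parameters $p$ and $q=2$. $\mathbb{P}_{\beta,r}$ is the joint law of $(\eta,\sigma)\in\{0,1\}^{\mathcal{E}_{\mathbb{T}}}\times\{-1,+1\}^{\mathcal{V}_{\mathbb{T}}}$ where $\eta\sim\nu_{p,2}$ and, given $\eta$, each FK cluster (connected component of open edges, $\eta(e)=1$) independently receives spin $+1$ with probability $r$ and $-1$ with probability $1-r$, all its vertices getting that spin. *)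

theory Defs
  imports "HOL-Probability.Probability" "HOL-Library.Countable"
begin

type_synonym vtx = "int \<times> int"
type_synonym edg = "vtx set"

text \<open>Triangular lattice embedded in Z^2: neighbours differ by (1,0),(0,1),(1,1) or their negatives.\<close>
definition tadj :: "vtx \<Rightarrow> vtx \<Rightarrow> bool" where
  "tadj u v \<longleftrightarrow> (fst v - fst u, snd v - snd u) \<in> {(1,0),(-1,0),(0,1),(0,-1),(1,1),(-1,-1)}"

definition TE :: "edg set" where
  "TE = {{u, v} | u v. tadj u v}"

definition box :: "nat \<Rightarrow> vtx set" where
  "box n = {-int n..int n} \<times> {-int n..int n}"

definition box_edges :: "nat \<Rightarrow> edg set" where
  "box_edges n = {e \<in> TE. e \<subseteq> box n}"

definition open_rel :: "edg set \<Rightarrow> (vtx \<times> vtx) set" where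
  "open_rel Op = {(a, b). {a, b} \<in> Op}"

definition num_clusters :: "nat \<Rightarrow> edg set \<Rightarrow> nat" where
  "num_clusters n Op = card (box n // ((open_rel Op)\<^sup>*))"

definition fk_weight :: "real \<Rightarrow> real \<Rightarrow> nat \<Rightarrow> edg set \<Rightarrow> real" where
  "fk_weight p q n Op = p ^ card Op * (1 - p) ^ card (box_edges n - Op) * q ^ num_clusters n Op"

definition cfg :: "edg set \<Rightarrow> (edg \<Rightarrow> bool)" where
  "cfg Op = (\<lambda>e\<in>TE. e \<in> Op)"

text \<open>Free-boundary random-cluster measure on the box, applied to an event of full configurations
  (edges outside the box are closed).\<close>
definition fk_free :: "real \<Rightarrow> real \<Rightarrow> nat \<Rightarrow> (edg \<Rightarrow> bool) set \<Rightarrow> real" where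
  "fk_free p q n A =
     (\<Sum>Op\<in>Pow (box_edges n). if cfg Op \<in> A then fk_weight p q n Op else 0)
     / (\<Sum>Op\<in>Pow (box_edges n). fk_weight p q n Op)"

definition Omega_E :: "(edg \<Rightarrow> bool) measure" where
  "Omega_E = (\<Pi>\<^sub>M e\<in>TE. count_space (UNIV :: bool set))"

text \<open>nu is the infinite-volume (free) random-cluster measure: probabilities of all cylinder events
  are the limits of the finite-volume free measures.\<close>
definition FK_free_limit :: "real \<Rightarrow> real \<Rightarrow> (edg \<Rightarrow> bool) measure \<Rightarrow> bool" where
  "FK_free_limit p q \<nu> \<longleftrightarrow>
     prob_space \<nu> \<and> sets \<nu> = sets Omega_E \<and>
     (\<forall>A F. finite F \<and> F \<subseteq> TE \<and> A \<in> sets Omega_E \<and>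
        (\<forall>\<eta>\<in>space Omega_E. \<forall>\<eta>'\<in>space Omega_E. (\<forall>e\<in>F. \<eta> e = \<eta>' e) \<longrightarrow> (\<eta> \<in> A \<longleftrightarrow> \<eta>' \<in> A))
        \<longrightarrow> (\<lambda>n. fk_free p q n A) \<longlonglongrightarrow> measure \<nu> A)"

text \<open>Plus-boundary Ising model on box n with weight exp((beta/2) * sum over edges of sigma_u sigma_v),
  which is the Ising model coupled to FK with p = 1 - exp(-beta).\<close>
definition ext_plus :: "nat \<Rightarrow> (vtx \<Rightarrow> int) \<Rightarrow> vtx \<Rightarrow> int" where
  "ext_plus n \<sigma> x = (if x \<in> box n then \<sigma> x else 1)"

definition ising_weight :: "real \<Rightarrow> nat \<Rightarrow> (vtx \<Rightarrow> int) \<Rightarrow> real" where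
  "ising_weight \<beta> n \<sigma> =
     exp (\<beta> / 2 * (\<Sum>e\<in>{e \<in> TE. e \<inter> box n \<noteq> {}}. real_of_int (\<Prod>x\<in>e. ext_plus n \<sigma> x)))"

definition ising_plus_mag :: "real \<Rightarrow> nat \<Rightarrow> real" where
  "ising_plus_mag \<beta> n =
     (\<Sum>\<sigma>\<in>box n \<rightarrow>\<^sub>E {-1, 1}. real_of_int (\<sigma> (0, 0)) * ising_weight \<beta> n \<sigma>)
     / (\<Sum>\<sigma>\<in>box n \<rightarrow>\<^sub>E {-1, 1}. ising_weight \<beta> n \<sigma>)"

definition spont_mag :: "real \<Rightarrow> real" where
  "spont_mag \<beta> = lim (ising_plus_mag \<beta>)"

definition beta_c :: real where
  "beta_c = Inf {\<beta>. 0 \<le> \<beta> \<and> spont_mag \<beta> > 0}"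

definition connected :: "(edg \<Rightarrow> bool) \<Rightarrow> vtx \<Rightarrow> vtx \<Rightarrow> bool" where
  "connected \<eta> u v \<longleftrightarrow> (u, v) \<in> {(a, b). {a, b} \<in> TE \<and> \<eta> {a, b}}\<^sup>*"

definition rep :: "(edg \<Rightarrow> bool) \<Rightarrow> vtx \<Rightarrow> vtx" where
  "rep \<eta> v = arg_min (to_nat :: vtx \<Rightarrow> nat) (connected \<eta> v)"

definition spin_pmf :: "real \<Rightarrow> int pmf" where
  "spin_pmf r = map_pmf (\<lambda>b. if b then 1 else -1) (bernoulli_pmf r)"

text \<open>Each cluster gets the i.i.d. spin tau of its representative: P_{beta,r}.\<close>
definition P_joint :: "(edg \<Rightarrow> bool) measure \<Rightarrow> real \<Rightarrow> ((edg \<Rightarrow> bool) \<times> (vtx \<Rightarrow> int)) measure" where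
  "P_joint \<nu> r =
     distr (\<nu> \<Otimes>\<^sub>M (\<Pi>\<^sub>M v\<in>(UNIV :: vtx set). measure_pmf (spin_pmf r)))
           (Omega_E \<Otimes>\<^sub>M (\<Pi>\<^sub>M v\<in>(UNIV :: vtx set). count_space (UNIV :: int set)))
           (\<lambda>(\<eta>, \<tau>). (\<eta>, \<lambda>v. \<tau> (rep \<eta> v)))"

end

theory Submission
  imports Defs
begin

text \<open>Integrating out the cluster spins, the event I has conditional probability c ^ N given the
  edge configuration, where c is the probability of the spin \<kappa> and N the number of clusters
  meeting V; this weight is increasing in the configuration. In a finite box the random-cluster
  weight with q \<ge> 1 is log-supermodular, because the number of clusters is submodular, so the
  Ahlswede--Daykin four functions theorem yields Holley's comparison between the conditionings on
  As and on Ag, and the Harris--FKG inequality for the tilt by c ^ N. Together they give the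
  inequality in every box; it passes to the infinite-volume limit, first in the box size and
  then, by dominated convergence, in the truncation of the clusters used to compute N.\<close>

section \<open>Correlation inequalities on the lattice of subsets\<close>


lemma four_functions_base:
  fixes a0 a1 b0 b1 c0 c1 d0 d1 :: real
  assumes nonneg: "0 \<le> a0" "0 \<le> a1" "0 \<le> b0" "0 \<le> b1" "0 \<le> c0" "0 \<le> c1" "0 \<le> d0" "0 \<le> d1"
    and h00: "a0 * b0 \<le> c0 * d0" and h01: "a0 * b1 \<le> c1 * d0" and h10: "a1 * b0 \<le> c1 * d0"
    and h11: "a1 * b1 \<le> c1 * d1"
  shows "(a0 + a1) * (b0 + b1) \<le> (c0 + c1) * (d0 + d1)"
proof (cases "c1 * d0 = 0")
  case True
  then have "a0 * b1 = 0" "a1 * b0 = 0" using h01 h10 nonneg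
    by (metis antisym mult_nonneg_nonneg)+
  then have "(a0 + a1) * (b0 + b1) = a0 * b0 + a1 * b1 + (a0 * b1 + a1 * b0)"
    by (simp add: algebra_simps)
  also have "\<dots> = a0 * b0 + a1 * b1" by (simp only: \<open>a0 * b1 = 0\<close> \<open>a1 * b0 = 0\<close> add_0_right)
  also have "\<dots> \<le> c0 * d0 + c1 * d1" using h00 h11 by simp
  also have "\<dots> \<le> (c0 + c1) * (d0 + d1)" using nonneg by (simp add: algebra_simps)
  finally show ?thesis .
next
  case False
  define X where "X = c1 * d0"
  have "X > 0" using False nonneg unfolding X_def by (simp add: less_le)
  \<comment> \<open>Multiplied by X, the claim is the product of h00 and h11 shifted by X, up to the
    nonnegative defect (X - a0 b1)(X - a1 b0).\<close>
  have "X * ((a0 + a1) * (b0 + b1)) = (a0 * b0 + X) * (X + a1 * b1) - (X - a0 * b1) * (X - a1 * b0)"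
    by (simp add: algebra_simps)
  also have "\<dots> \<le> (a0 * b0 + X) * (X + a1 * b1)"
    using h01 h10 unfolding X_def by simp
  also have "\<dots> \<le> (c0 * d0 + X) * (X + c1 * d1)"
    using h00 h11 nonneg \<open>X > 0\<close> by (intro mult_mono) auto
  also have "\<dots> = X * ((c0 + c1) * (d0 + d1))"
    unfolding X_def by (simp add: algebra_simps)
  finally show ?thesis using \<open>X > 0\<close> by simp
qed

lemma sum_Pow_insert:
  assumes "finite S" "x \<notin> S"
  shows "(\<Sum>A\<in>Pow (insert x S). f A) = (\<Sum>A\<in>Pow S. f A + f (insert x A))"
proof -
  have "inj_on (insert x) (Pow S)" using assms(2) by (auto simp: inj_on_def)
  moreover have "Pow S \<inter> insert x ` Pow S = {}" using assms(2) by auto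
  ultimately show ?thesis
    using assms(1) by (simp add: Pow_insert sum.union_disjoint sum.reindex sum.distrib)
qed

lemma four_functions:
  fixes \<alpha> \<beta> \<gamma> \<delta> :: "'a set \<Rightarrow> real"
  assumes "finite S"
    and "\<And>A. A \<subseteq> S \<Longrightarrow> 0 \<le> \<alpha> A" "\<And>A. A \<subseteq> S \<Longrightarrow> 0 \<le> \<beta> A"
    and "\<And>A. A \<subseteq> S \<Longrightarrow> 0 \<le> \<gamma> A" "\<And>A. A \<subseteq> S \<Longrightarrow> 0 \<le> \<delta> A"
    and "\<And>A B. A \<subseteq> S \<Longrightarrow> B \<subseteq> S \<Longrightarrow> \<alpha> A * \<beta> B \<le> \<gamma> (A \<union> B) * \<delta> (A \<inter> B)"
  shows "(\<Sum>A\<in>Pow S. \<alpha> A) * (\<Sum>A\<in>Pow S. \<beta> A) \<le> (\<Sum>A\<in>Pow S. \<gamma> A) * (\<Sum>A\<in>Pow S. \<delta> A)"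
  using assms
proof (induction S arbitrary: \<alpha> \<beta> \<gamma> \<delta> rule: finite_induct)
  case empty
  then show ?case by simp
next
  case (insert x S)
  have "(\<Sum>A\<in>Pow S. \<alpha> A + \<alpha> (insert x A)) * (\<Sum>A\<in>Pow S. \<beta> A + \<beta> (insert x A))
      \<le> (\<Sum>A\<in>Pow S. \<gamma> A + \<gamma> (insert x A)) * (\<Sum>A\<in>Pow S. \<delta> A + \<delta> (insert x A))"
  proof (rule insert.IH)
    fix A assume "A \<subseteq> S"
    then have "A \<subseteq> insert x S" "insert x A \<subseteq> insert x S" by auto
    then show "0 \<le> \<alpha> A + \<alpha> (insert x A)" "0 \<le> \<beta> A + \<beta> (insert x A)"
      "0 \<le> \<gamma> A + \<gamma> (insert x A)" "0 \<le> \<delta> A + \<delta> (insert x A)"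
      using insert.prems by (auto intro: add_nonneg_nonneg)
  next
    fix A B assume A: "A \<subseteq> S" and B: "B \<subseteq> S"
    have sub: "A \<subseteq> insert x S" "insert x A \<subseteq> insert x S" "B \<subseteq> insert x S" "insert x B \<subseteq> insert x S"
      "A \<union> B \<subseteq> insert x S" "insert x (A \<union> B) \<subseteq> insert x S" "A \<inter> B \<subseteq> insert x S"
      "insert x (A \<inter> B) \<subseteq> insert x S" using A B by auto
    have "x \<notin> A" "x \<notin> B" using A B insert.hyps by auto
    then have "insert x A \<union> B = insert x (A \<union> B)" "A \<union> insert x B = insert x (A \<union> B)"
      "insert x A \<union> insert x B = insert x (A \<union> B)" "insert x A \<inter> B = A \<inter> B"
      "A \<inter> insert x B = A \<inter> B" "insert x A \<inter> insert x B = insert x (A \<inter> B)" by auto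
    then show "(\<alpha> A + \<alpha> (insert x A)) * (\<beta> B + \<beta> (insert x B))
        \<le> (\<gamma> (A \<union> B) + \<gamma> (insert x (A \<union> B))) * (\<delta> (A \<inter> B) + \<delta> (insert x (A \<inter> B)))"
      using insert.prems(5)[OF sub(1) sub(3)] insert.prems(5)[OF sub(1) sub(4)]
        insert.prems(5)[OF sub(2) sub(3)] insert.prems(5)[OF sub(2) sub(4)]
      by (intro four_functions_base insert.prems(1-4) sub) auto
  qed
  then show ?case
    by (simp only: sum_Pow_insert[OF insert.hyps])
qed


lemma harris_fkg_sums:
  fixes \<mu> f g :: "'a set \<Rightarrow> real"
  assumes "finite S"
    and \<mu>: "\<And>A. A \<subseteq> S \<Longrightarrow> 0 \<le> \<mu> A"
      "\<And>A B. A \<subseteq> S \<Longrightarrow> B \<subseteq> S \<Longrightarrow> \<mu> A * \<mu> B \<le> \<mu> (A \<union> B) * \<mu> (A \<inter> B)"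
    and f: "\<And>A. A \<subseteq> S \<Longrightarrow> 0 \<le> f A" "\<And>A B. A \<subseteq> B \<Longrightarrow> B \<subseteq> S \<Longrightarrow> f A \<le> f B"
    and g: "\<And>A. A \<subseteq> S \<Longrightarrow> 0 \<le> g A" "\<And>A B. A \<subseteq> B \<Longrightarrow> B \<subseteq> S \<Longrightarrow> g A \<le> g B"
  shows "(\<Sum>A\<in>Pow S. \<mu> A * f A) * (\<Sum>A\<in>Pow S. \<mu> A * g A)
       \<le> (\<Sum>A\<in>Pow S. \<mu> A * f A * g A) * (\<Sum>A\<in>Pow S. \<mu> A)"
proof (rule four_functions[OF \<open>finite S\<close>])
  fix A B assume A: "A \<subseteq> S" and B: "B \<subseteq> S"
  have "f A * g B \<le> f (A \<union> B) * g (A \<union> B)"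
    using A B f g by (intro mult_mono) auto
  then have "(\<mu> A * \<mu> B) * (f A * g B) \<le> (\<mu> (A \<union> B) * \<mu> (A \<inter> B)) * (f (A \<union> B) * g (A \<union> B))"
    by (rule mult_mono[OF \<mu>(2)[OF A B] _ mult_nonneg_nonneg[OF \<mu>(1) \<mu>(1)]
          mult_nonneg_nonneg[OF f(1) g(1)]]) (use A B in auto)
  then show "\<mu> A * f A * (\<mu> B * g B) \<le> \<mu> (A \<union> B) * f (A \<union> B) * g (A \<union> B) * \<mu> (A \<inter> B)"
    by (simp add: algebra_simps)
qed (use \<mu> f g in auto)

lemma holley_sums:
  fixes \<mu> \<nu> f :: "'a set \<Rightarrow> real"
  assumes "finite S"
    and nonneg: "\<And>A. A \<subseteq> S \<Longrightarrow> 0 \<le> \<mu> A" "\<And>A. A \<subseteq> S \<Longrightarrow> 0 \<le> \<nu> A"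
    and dominated: "\<And>A B. A \<subseteq> S \<Longrightarrow> B \<subseteq> S \<Longrightarrow> \<mu> A * \<nu> B \<le> \<nu> (A \<union> B) * \<mu> (A \<inter> B)"
    and f: "\<And>A. A \<subseteq> S \<Longrightarrow> 0 \<le> f A" "\<And>A B. A \<subseteq> B \<Longrightarrow> B \<subseteq> S \<Longrightarrow> f A \<le> f B"
  shows "(\<Sum>A\<in>Pow S. \<mu> A * f A) * (\<Sum>A\<in>Pow S. \<nu> A) \<le> (\<Sum>A\<in>Pow S. \<nu> A * f A) * (\<Sum>A\<in>Pow S. \<mu> A)"
proof (rule four_functions[OF \<open>finite S\<close>])
  fix A B assume A: "A \<subseteq> S" and B: "B \<subseteq> S"
  have "(\<mu> A * \<nu> B) * f A \<le> (\<nu> (A \<union> B) * \<mu> (A \<inter> B)) * f (A \<union> B)"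
    using A B nonneg f by (intro mult_mono dominated) (auto intro: order_trans[OF _ dominated[OF A B]])
  then show "\<mu> A * f A * \<nu> B \<le> \<nu> (A \<union> B) * f (A \<union> B) * \<mu> (A \<inter> B)"
    by (simp add: algebra_simps)
qed (use nonneg f in auto)

text \<open>Conditioning on a larger event and tilting by an increasing weight g can only increase
  the mean of an increasing f: chain the Holley comparison of \<mu> with \<nu> and the Harris--FKG
  inequality for \<nu>.\<close>
lemma holley_fkg_sums:
  fixes \<mu> \<nu> f g :: "'a set \<Rightarrow> real"
  assumes "finite S"
    and nonneg: "\<And>A. A \<subseteq> S \<Longrightarrow> 0 \<le> \<mu> A" "\<And>A. A \<subseteq> S \<Longrightarrow> 0 \<le> \<nu> A"
    and dominated: "\<And>A B. A \<subseteq> S \<Longrightarrow> B \<subseteq> S \<Longrightarrow> \<mu> A * \<nu> B \<le> \<nu> (A \<union> B) * \<mu> (A \<inter> B)"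
    and lattice: "\<And>A B. A \<subseteq> S \<Longrightarrow> B \<subseteq> S \<Longrightarrow> \<nu> A * \<nu> B \<le> \<nu> (A \<union> B) * \<nu> (A \<inter> B)"
    and f: "\<And>A. A \<subseteq> S \<Longrightarrow> 0 \<le> f A" "\<And>A B. A \<subseteq> B \<Longrightarrow> B \<subseteq> S \<Longrightarrow> f A \<le> f B"
    and g: "\<And>A. A \<subseteq> S \<Longrightarrow> 0 \<le> g A" "\<And>A B. A \<subseteq> B \<Longrightarrow> B \<subseteq> S \<Longrightarrow> g A \<le> g B"
  shows "(\<Sum>A\<in>Pow S. \<mu> A * f A) * (\<Sum>A\<in>Pow S. \<nu> A * g A)
       \<le> (\<Sum>A\<in>Pow S. \<nu> A * f A * g A) * (\<Sum>A\<in>Pow S. \<mu> A)"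
proof -
  let ?Mf = "\<Sum>A\<in>Pow S. \<mu> A * f A" and ?M = "\<Sum>A\<in>Pow S. \<mu> A"
  let ?Nf = "\<Sum>A\<in>Pow S. \<nu> A * f A" and ?Ng = "\<Sum>A\<in>Pow S. \<nu> A * g A"
  let ?Nfg = "\<Sum>A\<in>Pow S. \<nu> A * f A * g A" and ?N = "\<Sum>A\<in>Pow S. \<nu> A"
  have holley: "?Mf * ?N \<le> ?Nf * ?M"
    by (rule holley_sums[OF \<open>finite S\<close> nonneg dominated f])
  have harris: "?Nf * ?Ng \<le> ?Nfg * ?N"
    by (rule harris_fkg_sums[OF \<open>finite S\<close> nonneg(2) lattice f g])
  have sums_nonneg: "0 \<le> ?Mf" "0 \<le> ?M" "0 \<le> ?Ng" "0 \<le> ?N"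
    using nonneg f g by (auto intro!: sum_nonneg)
  show ?thesis
  proof (cases "?N = 0")
    case True
    then have "\<forall>A\<in>Pow S. \<nu> A = 0"
      using sum_nonneg_eq_0_iff[of "Pow S" \<nu>] nonneg(2) \<open>finite S\<close> by auto
    then show ?thesis using sums_nonneg by simp
  next
    case False
    have "(?Mf * ?Ng) * ?N = (?Mf * ?N) * ?Ng" by simp
    also have "\<dots> \<le> (?Nf * ?M) * ?Ng" using holley sums_nonneg by (intro mult_right_mono)
    also have "\<dots> = ?M * (?Nf * ?Ng)" by simp
    also have "\<dots> \<le> ?M * (?Nfg * ?N)" using harris sums_nonneg by (intro mult_left_mono)
    finally have "(?Mf * ?Ng) * ?N \<le> (?Nfg * ?M) * ?N" by (simp add: ac_simps)
    then show ?thesis using False sums_nonneg by simp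
  qed
qed

section \<open>Cluster counts and the random-cluster weight\<close>


lemma open_rel_sym: "sym (open_rel X)"
  unfolding open_rel_def sym_def by (auto simp: insert_commute)

lemma equiv_open_rel_rtrancl: "equiv UNIV ((open_rel X)\<^sup>*)"
  unfolding equiv_def
  by (auto simp: refl_rtrancl trans_rtrancl sym_rtrancl[OF open_rel_sym])

lemma open_rel_insert: "open_rel (insert {a, b} X) = open_rel X \<union> {(a, b), (b, a)}"
  unfolding open_rel_def by (auto simp: doubleton_eq_iff)

lemma rtrancl_equiv_insert_pair:
  fixes R :: "'a rel" and a b :: 'a
  assumes R: "equiv UNIV R"
  defines "U \<equiv> R``{a} \<union> R``{b}"
  shows "(R \<union> {(a, b), (b, a)})\<^sup>* = R \<union> U \<times> U"
proof
  have "refl (R \<union> U \<times> U)" using R unfolding equiv_def refl_on_def by auto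
  moreover have "trans (R \<union> U \<times> U)"
    using R unfolding equiv_def U_def refl_on_def sym_def trans_def by blast
  ultimately have "(R \<union> U \<times> U)\<^sup>* = R \<union> U \<times> U"
    by (auto simp: rtrancl_trancl_reflcl refl_on_def)
  moreover have "R \<union> {(a, b), (b, a)} \<subseteq> R \<union> U \<times> U"
    using R unfolding U_def equiv_def refl_on_def by auto
  ultimately show "(R \<union> {(a, b), (b, a)})\<^sup>* \<subseteq> R \<union> U \<times> U"
    by (metis rtrancl_mono)
  have "U \<times> U \<subseteq> (R \<union> {(a, b), (b, a)})\<^sup>*"
  proof clarify
    fix x y assume "x \<in> U" "y \<in> U"
    have "R \<subseteq> (R \<union> {(a, b), (b, a)})\<^sup>*" "(a, b) \<in> (R \<union> {(a, b), (b, a)})\<^sup>*"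
      "(b, a) \<in> (R \<union> {(a, b), (b, a)})\<^sup>*" by auto
    moreover have "(x, a) \<in> R \<or> (x, b) \<in> R" "(a, y) \<in> R \<or> (b, y) \<in> R"
      using \<open>x \<in> U\<close> \<open>y \<in> U\<close> R unfolding U_def equiv_def sym_def by auto
    ultimately show "(x, y) \<in> (R \<union> {(a, b), (b, a)})\<^sup>*"
      by (meson rtrancl_trans subsetD)
  qed
  then show "R \<union> U \<times> U \<subseteq> (R \<union> {(a, b), (b, a)})\<^sup>*" by auto
qed

lemma quotient_merge_classes:
  fixes R :: "'a rel" and a b :: 'a
  assumes R: "equiv UNIV R" and "a \<in> B" "b \<in> B"
  defines "U \<equiv> R``{a} \<union> R``{b}"
  shows "B // (R \<union> U \<times> U) = insert U (B // R - {R``{a}, R``{b}})"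
proof -
  have class_eq: "(R \<union> U \<times> U)``{x} = (if x \<in> U then U else R``{x})" for x
  proof (cases "x \<in> U")
    case True
    then have "R``{x} \<subseteq> U"
      using R unfolding U_def equiv_def sym_def trans_def by blast
    then show ?thesis using True by auto
  qed auto
  have other: "R``{x} \<noteq> R``{a} \<and> R``{x} \<noteq> R``{b}" if "x \<notin> U" for x
    using that R unfolding U_def equiv_def refl_on_def by auto
  show ?thesis
  proof (intro equalityI subsetI)
    fix C assume "C \<in> B // (R \<union> U \<times> U)"
    then obtain x where "x \<in> B" "C = (R \<union> U \<times> U)``{x}" by (rule quotientE)
    then show "C \<in> insert U (B // R - {R``{a}, R``{b}})"
      using other[of x] by (auto simp: class_eq intro: quotientI)
  next
    fix C assume C: "C \<in> insert U (B // R - {R``{a}, R``{b}})"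
    have "a \<in> U" using R unfolding U_def equiv_def refl_on_def by auto
    then have "U \<in> B // (R \<union> U \<times> U)"
      using quotientI[OF \<open>a \<in> B\<close>, of "R \<union> U \<times> U"] by (simp add: class_eq)
    moreover have "C \<in> B // (R \<union> U \<times> U)" if "C \<in> B // R" "C \<noteq> R``{a}" "C \<noteq> R``{b}"
    proof -
      obtain x where x: "x \<in> B" "C = R``{x}" using \<open>C \<in> B // R\<close> by (rule quotientE)
      have "x \<notin> U"
        using that x R unfolding U_def by (auto dest: equiv_class_eq)
      then show ?thesis using x class_eq[of x] by (metis quotientI)
    qed
    ultimately show "C \<in> B // (R \<union> U \<times> U)" using C by auto
  qed
qed

definition cluster_count :: "vtx set \<Rightarrow> edg set \<Rightarrow> nat" where
  "cluster_count B X = card (B // (open_rel X)\<^sup>*)"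

lemma num_clusters_eq: "num_clusters n X = cluster_count (box n) X"
  unfolding num_clusters_def cluster_count_def ..

lemma cluster_count_insert_connected:
  assumes "(a, b) \<in> (open_rel X)\<^sup>*"
  shows "cluster_count B (insert {a, b} X) = cluster_count B X"
proof -
  have "(b, a) \<in> (open_rel X)\<^sup>*"
    using assms equiv_open_rel_rtrancl unfolding equiv_def sym_def by blast
  then have "open_rel (insert {a, b} X) \<subseteq> (open_rel X)\<^sup>*"
    using assms by (auto simp: open_rel_insert)
  then have "(open_rel (insert {a, b} X))\<^sup>* = (open_rel X)\<^sup>*"
    by (metis open_rel_insert rtrancl_subset sup_ge1)
  then show ?thesis unfolding cluster_count_def by simp
qed

lemma cluster_count_insert_disconnected:
  assumes "finite B" "a \<in> B" "b \<in> B" and disc: "(a, b) \<notin> (open_rel X)\<^sup>*"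
  shows "cluster_count B (insert {a, b} X) + 1 = cluster_count B X"
proof -
  define R where "R = (open_rel X)\<^sup>*"
  define U where "U = R``{a} \<union> R``{b}"
  have R: "equiv UNIV R" unfolding R_def by (rule equiv_open_rel_rtrancl)
  have "(open_rel (insert {a, b} X))\<^sup>* = (R \<union> {(a, b), (b, a)})\<^sup>*"
    unfolding R_def open_rel_insert by (metis rtrancl_Un_rtrancl rtrancl_idemp)
  also have "\<dots> = R \<union> U \<times> U" unfolding U_def by (rule rtrancl_equiv_insert_pair[OF R])
  finally have quot: "B // (open_rel (insert {a, b} X))\<^sup>* = insert U (B // R - {R``{a}, R``{b}})"
    using quotient_merge_classes[OF R assms(2,3)] unfolding U_def by simp
  have fin: "finite (B // R)" using assms(1) unfolding quotient_def by simp
  have in_quot: "R``{a} \<in> B // R" "R``{b} \<in> B // R" using assms(2,3) by (auto intro: quotientI)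
  have distinct: "R``{a} \<noteq> R``{b}" using disc R unfolding R_def by (auto dest: eq_equiv_class)
  then have "2 \<le> card (B // R)" using card_mono[OF fin, of "{R``{a}, R``{b}}"] in_quot by simp
  moreover have "U \<notin> B // R - {R``{a}, R``{b}}"
  proof
    assume "U \<in> B // R - {R``{a}, R``{b}}"
    then have "U \<in> B // R" "U \<noteq> R``{a}" by auto
    then obtain x where x: "U = R``{x}" by (blast elim: quotientE)
    have "a \<in> U" using equiv_class_self[OF R UNIV_I] unfolding U_def by blast
    then have "(x, a) \<in> R" using x by simp
    then have "R``{x} = R``{a}" by (rule equiv_class_eq[OF R])
    with x \<open>U \<noteq> R``{a}\<close> show False by simp
  qed
  ultimately have "card (insert U (B // R - {R``{a}, R``{b}})) + 1 = card (B // R)"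
    using fin in_quot distinct by (simp add: card_Diff_subset)
  then show ?thesis unfolding cluster_count_def quot R_def by simp
qed

lemma cluster_count_insert_le:
  assumes "finite B" "a \<in> B" "b \<in> B"
  shows "cluster_count B X \<le> cluster_count B (insert {a, b} X) + 1"
proof (cases "(a, b) \<in> (open_rel X)\<^sup>*")
  case True
  then show ?thesis by (simp add: cluster_count_insert_connected)
next
  case False
  then show ?thesis using cluster_count_insert_disconnected[OF assms False] by simp
qed

text \<open>An edge lowers the number of clusters by one exactly when its endpoints are not yet
  connected, which becomes less likely as edges are added.\<close>
lemma cluster_count_insert_antimono:
  assumes "finite B" "a \<in> B" "b \<in> B" and "X \<subseteq> Y"
  shows "cluster_count B (insert {a, b} X) + cluster_count B Y
       \<le> cluster_count B X + cluster_count B (insert {a, b} Y)"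
proof (cases "(a, b) \<in> (open_rel X)\<^sup>*")
  case True
  then have "(a, b) \<in> (open_rel Y)\<^sup>*"
    using \<open>X \<subseteq> Y\<close> rtrancl_mono[of "open_rel X" "open_rel Y"] unfolding open_rel_def by auto
  then show ?thesis using True by (simp add: cluster_count_insert_connected)
next
  case False
  then show ?thesis
    using cluster_count_insert_disconnected[OF assms(1-3) False] cluster_count_insert_le[OF assms(1-3), of Y]
    by linarith
qed

lemma cluster_count_submodular:
  assumes "finite B" "finite Y" and edges: "\<forall>e\<in>Y. \<exists>a b. e = {a, b} \<and> a \<in> B \<and> b \<in> B"
  shows "cluster_count B X + cluster_count B Y \<le> cluster_count B (X \<union> Y) + cluster_count B (X \<inter> Y)"
proof -
  have add_edges: "cluster_count B (C \<union> D) + cluster_count B A \<le> cluster_count B C + cluster_count B (A \<union> D)"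
    if "finite D" "\<forall>e\<in>D. \<exists>a b. e = {a, b} \<and> a \<in> B \<and> b \<in> B" "C \<subseteq> A" for A C D
    using that
  proof (induction D rule: finite_induct)
    case (insert e D)
    obtain a b where e: "e = {a, b}" "a \<in> B" "b \<in> B" using insert.prems by auto
    have "cluster_count B (insert {a, b} (C \<union> D)) + cluster_count B (A \<union> D)
        \<le> cluster_count B (C \<union> D) + cluster_count B (insert {a, b} (A \<union> D))"
      using insert.prems by (intro cluster_count_insert_antimono[OF \<open>finite B\<close> e(2,3)]) auto
    then show ?case using insert e(1) by simp
  qed simp
  have "cluster_count B ((X \<inter> Y) \<union> (Y - X)) + cluster_count B X
       \<le> cluster_count B (X \<inter> Y) + cluster_count B (X \<union> (Y - X))"
    using assms by (intro add_edges) auto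
  moreover have "(X \<inter> Y) \<union> (Y - X) = Y" "X \<union> (Y - X) = X \<union> Y" by auto
  ultimately show ?thesis by simp
qed

lemma finite_box: "finite (box n)"
  unfolding box_def by simp

lemma finite_box_edges: "finite (box_edges n)"
  using finite_subset[of "box_edges n" "Pow (box n)"] finite_box unfolding box_edges_def by auto

lemma box_edges_subset_TE: "box_edges n \<subseteq> TE"
  unfolding box_edges_def by auto

lemma box_edge_endpoints: "e \<in> box_edges n \<Longrightarrow> \<exists>a b. e = {a, b} \<and> a \<in> box n \<and> b \<in> box n"
  unfolding box_edges_def TE_def by blast

lemma fk_weight_nonneg: "0 \<le> p \<Longrightarrow> p \<le> 1 \<Longrightarrow> 0 \<le> q \<Longrightarrow> 0 \<le> fk_weight p q n X"
  unfolding fk_weight_def by simp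

lemma fk_weight_log_supermodular:
  assumes p: "0 \<le> p" "p \<le> 1" and q: "1 \<le> q" and A: "A \<subseteq> box_edges n" and B: "B \<subseteq> box_edges n"
  shows "fk_weight p q n A * fk_weight p q n B \<le> fk_weight p q n (A \<union> B) * fk_weight p q n (A \<inter> B)"
proof -
  let ?S = "box_edges n"
  have "finite A" "finite B" using A B finite_box_edges by (auto intro: finite_subset)
  then have open_count: "card A + card B = card (A \<union> B) + card (A \<inter> B)"
    by (rule card_Un_Int)
  have complements: "?S - (A \<union> B) = (?S - A) \<inter> (?S - B)" "?S - (A \<inter> B) = (?S - A) \<union> (?S - B)"
    by auto
  have closed_count: "card (?S - A) + card (?S - B) = card (?S - (A \<union> B)) + card (?S - (A \<inter> B))"
    unfolding complements by (metis add.commute card_Un_Int finite_Diff finite_box_edges)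
  have clusters: "num_clusters n A + num_clusters n B \<le> num_clusters n (A \<union> B) + num_clusters n (A \<inter> B)"
    unfolding num_clusters_eq
    using finite_box \<open>finite B\<close> box_edge_endpoints B by (intro cluster_count_submodular) auto
  have "fk_weight p q n A * fk_weight p q n B
      = p ^ (card A + card B) * (1 - p) ^ (card (?S - A) + card (?S - B))
        * q ^ (num_clusters n A + num_clusters n B)"
    unfolding fk_weight_def by (simp add: power_add algebra_simps)
  also have "\<dots> \<le> p ^ (card (A \<union> B) + card (A \<inter> B)) * (1 - p) ^ (card (?S - (A \<union> B)) + card (?S - (A \<inter> B)))
        * q ^ (num_clusters n (A \<union> B) + num_clusters n (A \<inter> B))"
    unfolding open_count closed_count
    using p q by (intro mult_left_mono power_increasing[OF clusters]) simp_all
  also have "\<dots> = fk_weight p q n (A \<union> B) * fk_weight p q n (A \<inter> B)"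
    unfolding fk_weight_def by (simp add: power_add algebra_simps)
  finally show ?thesis .
qed


lemma connected_refl: "connected \<eta> u u"
  unfolding connected_def by simp

lemma connected_trans: "connected \<eta> u v \<Longrightarrow> connected \<eta> v w \<Longrightarrow> connected \<eta> u w"
  unfolding connected_def by (rule rtrancl_trans)

lemma connected_sym: "connected \<eta> u v \<Longrightarrow> connected \<eta> v u"
proof -
  have "sym {(a, b). {a, b} \<in> TE \<and> \<eta> {a, b}}" unfolding sym_def by (auto simp: insert_commute)
  then show "connected \<eta> u v \<Longrightarrow> connected \<eta> v u"
    unfolding connected_def by (rule symD[OF sym_rtrancl])
qed

lemma connected_mono:
  assumes "\<And>x. \<eta> x \<Longrightarrow> \<eta>' x" "connected \<eta> u v"
  shows "connected \<eta>' u v"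
  using assms(2) unfolding connected_def
  by (rule rtrancl_mono[THEN subsetD, rotated]) (auto intro: assms(1))

lemma connected_rep: "connected \<eta> v (rep \<eta> v)"
  unfolding rep_def using arg_min_nat_lemma[of "connected \<eta> v" v to_nat] connected_refl by blast

lemma to_nat_rep_le: "connected \<eta> v w \<Longrightarrow> to_nat (rep \<eta> v) \<le> to_nat w"
  unfolding rep_def using arg_min_nat_lemma[of "connected \<eta> v" w to_nat] by blast

lemma rep_eq_iff: "rep \<eta> v = rep \<eta> v' \<longleftrightarrow> connected \<eta> v v'"
proof
  assume "rep \<eta> v = rep \<eta> v'"
  then show "connected \<eta> v v'"
    using connected_rep[of \<eta> v] connected_rep[of \<eta> v'] connected_sym connected_trans by metis
next
  assume "connected \<eta> v v'"
  then have "connected \<eta> v = connected \<eta> v'"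
    using connected_sym connected_trans by blast
  then show "rep \<eta> v = rep \<eta> v'" unfolding rep_def by simp
qed

lemma card_rep_image_antimono:
  fixes \<eta> \<eta>' :: "edg \<Rightarrow> bool" and V :: "vtx set"
  assumes "finite V" and mono: "\<And>x. \<eta> x \<Longrightarrow> \<eta>' x"
  shows "card (rep \<eta>' ` V) \<le> card (rep \<eta> ` V)"
proof -
  have same: "rep \<eta>' v = rep \<eta>' v'" if "rep \<eta> v = rep \<eta> v'" for v v'
  proof -
    have "connected \<eta> v v'" using that by (simp only: rep_eq_iff)
    then have "connected \<eta>' v v'" using mono by (rule connected_mono[rotated])
    then show ?thesis by (simp only: rep_eq_iff)
  qed
  define pick where "pick x = (SOME v. v \<in> V \<and> rep \<eta> v = x)" for x
  have pick: "pick (rep \<eta> v) \<in> V \<and> rep \<eta> (pick (rep \<eta> v)) = rep \<eta> v" if "v \<in> V" for v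
    unfolding pick_def by (rule someI[of _ v]) (use that in simp)
  have "rep \<eta>' (pick (rep \<eta> v)) = rep \<eta>' v" if "v \<in> V" for v
    using pick[OF that] by (intro same) simp
  then have "rep \<eta>' ` V = (\<lambda>x. rep \<eta>' (pick x)) ` (rep \<eta> ` V)"
    unfolding image_image by (intro image_cong[symmetric]) simp_all
  then show ?thesis using card_image_le[OF finite_imageI[OF assms(1)]] by simp
qed

definition box_trunc :: "nat \<Rightarrow> (edg \<Rightarrow> bool) \<Rightarrow> (edg \<Rightarrow> bool)" where
  "box_trunc m \<eta> = (\<lambda>e. \<eta> e \<and> e \<in> box_edges m)"

lemma box_mono: "M \<le> m \<Longrightarrow> box M \<subseteq> box m"
  unfolding box_def by auto

lemma eventually_in_box_edges:
  assumes "{x, y} \<in> TE"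
  shows "eventually (\<lambda>m. {x, y} \<in> box_edges m) sequentially"
proof -
  have in_box: "z \<in> box (nat (max \<bar>fst z\<bar> \<bar>snd z\<bar>))" for z
    unfolding box_def by (cases z) auto
  have "eventually (\<lambda>m. z \<in> box m) sequentially" for z
    using in_box[of z] box_mono by (auto simp: eventually_sequentially)
  then have "eventually (\<lambda>m. x \<in> box m \<and> y \<in> box m) sequentially"
    by (intro eventually_conj)
  then show ?thesis
    by eventually_elim (use assms in \<open>auto simp: box_edges_def\<close>)
qed

lemma connected_box_trunc_eventually:
  assumes "connected \<eta> u v"
  shows "eventually (\<lambda>m. connected (box_trunc m \<eta>) u v) sequentially"
  using assms unfolding connected_def
proof (induction rule: rtrancl_induct)
  case (step y z)
  then have yz: "{y, z} \<in> TE" "\<eta> {y, z}" by auto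
  show ?case
    using step.IH eventually_in_box_edges[OF yz(1)]
  proof eventually_elim
    case (elim m)
    then show ?case
      using yz unfolding box_trunc_def by (auto intro: rtrancl.rtrancl_into_rtrancl)
  qed
qed simp

lemma connected_box_trunc: "connected (box_trunc m \<eta>) u v \<Longrightarrow> connected \<eta> u v"
  by (rule connected_mono[of "box_trunc m \<eta>"]) (auto simp: box_trunc_def)

lemma rep_box_trunc_eventually: "eventually (\<lambda>m. rep (box_trunc m \<eta>) v = rep \<eta> v) sequentially"
  using connected_box_trunc_eventually[OF connected_rep[of \<eta> v]]
proof eventually_elim
  case (elim m)
  have "to_nat (rep (box_trunc m \<eta>) v) \<le> to_nat (rep \<eta> v)"
    using to_nat_rep_le[OF elim] .
  moreover have "to_nat (rep \<eta> v) \<le> to_nat (rep (box_trunc m \<eta>) v)"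
    using to_nat_rep_le connected_box_trunc connected_rep by blast
  ultimately show ?case by simp
qed

section \<open>Cylinder events and finite-volume expectations\<close>


lemma space_Omega_E: "space Omega_E = (\<Pi>\<^sub>E e\<in>TE. (UNIV :: bool set))"
  unfolding Omega_E_def by (simp add: space_PiM)

lemma cfg_in_space: "cfg X \<in> space Omega_E"
  unfolding space_Omega_E cfg_def by auto

definition depends_on_edges :: "edg set \<Rightarrow> ((edg \<Rightarrow> bool) \<Rightarrow> 'b) \<Rightarrow> bool" where
  "depends_on_edges F G \<longleftrightarrow>
     (\<forall>\<eta>\<in>space Omega_E. \<forall>\<eta>'\<in>space Omega_E. (\<forall>e\<in>F. \<eta> e = \<eta>' e) \<longrightarrow> G \<eta> = G \<eta>')"

lemma depends_on_edgesD:
  "depends_on_edges F G \<Longrightarrow> \<eta> \<in> space Omega_E \<Longrightarrow> \<eta>' \<in> space Omega_E \<Longrightarrow> (\<And>e. e \<in> F \<Longrightarrow> \<eta> e = \<eta>' e)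
    \<Longrightarrow> G \<eta> = G \<eta>'"
  unfolding depends_on_edges_def by blast

lemma depends_on_edges_mono: "F \<subseteq> F' \<Longrightarrow> depends_on_edges F G \<Longrightarrow> depends_on_edges F' G"
  unfolding depends_on_edges_def by blast

lemma depends_on_edges_mult:
  "depends_on_edges F G \<Longrightarrow> depends_on_edges F H \<Longrightarrow> depends_on_edges F (\<lambda>\<eta>. (G \<eta> :: real) * H \<eta>)"
  unfolding depends_on_edges_def by metis

lemma depends_on_edges_indicator:
  assumes "\<And>\<eta> \<eta>'. \<eta> \<in> space Omega_E \<Longrightarrow> \<eta>' \<in> space Omega_E \<Longrightarrow> (\<forall>e\<in>F. \<eta> e = \<eta>' e) \<Longrightarrow> Q \<eta> = Q \<eta>'"
  shows "depends_on_edges F (indicator {\<eta> \<in> space Omega_E. Q \<eta>} :: _ \<Rightarrow> real)"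
  unfolding depends_on_edges_def
proof (intro ballI impI)
  fix \<eta> \<eta>' assume "\<eta> \<in> space Omega_E" "\<eta>' \<in> space Omega_E" "\<forall>e\<in>F. \<eta> e = \<eta>' e"
  with assms have "Q \<eta> = Q \<eta>'" by blast
  with \<open>\<eta> \<in> space Omega_E\<close> \<open>\<eta>' \<in> space Omega_E\<close>
  show "(indicator {\<eta> \<in> space Omega_E. Q \<eta>} \<eta> :: real) = indicator {\<eta> \<in> space Omega_E. Q \<eta>} \<eta>'"
    by (simp add: indicator_def)
qed

lemma depends_on_edges_box_trunc: "depends_on_edges (box_edges m) (\<lambda>\<eta>. G (box_trunc m \<eta>))"
proof -
  have "box_trunc m \<eta> = box_trunc m \<eta>'" if "\<forall>e\<in>box_edges m. \<eta> e = \<eta>' e" for \<eta> \<eta>'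
    using that unfolding box_trunc_def by auto
  then show ?thesis unfolding depends_on_edges_def by metis
qed

lemma sets_cylinder:
  assumes "finite F" "F \<subseteq> TE"
  shows "{\<eta> \<in> space Omega_E. \<forall>e\<in>F. \<eta> e = \<xi> e} \<in> sets Omega_E"
proof -
  have [measurable]: "(\<lambda>\<eta>. \<eta> e) \<in> measurable Omega_E (count_space UNIV)" if "e \<in> F" for e
    using that assms unfolding Omega_E_def by (intro measurable_component_singleton) auto
  show ?thesis using assms(1) by measurable
qed

text \<open>An event determined by finitely many edges is a finite union of cylinders.\<close>
lemma depends_on_edges_sets:
  assumes F: "finite F" "F \<subseteq> TE" and G: "depends_on_edges F G"
  shows "{\<eta> \<in> space Omega_E. P (G \<eta>)} \<in> sets Omega_E"
proof -
  define A where "A = {\<eta> \<in> space Omega_E. P (G \<eta>)}"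
  define C where "C \<xi> = {\<eta> \<in> space Omega_E. \<forall>e\<in>F. \<eta> e = \<xi> e}" for \<xi> :: "edg \<Rightarrow> bool"
  have A_eq: "A = (\<Union>\<xi>\<in>(\<lambda>\<eta>. restrict \<eta> F) ` A. C \<xi>)"
  proof (intro equalityI subsetI)
    fix \<eta> assume "\<eta> \<in> A"
    then have "\<eta> \<in> C (restrict \<eta> F)" unfolding A_def C_def by auto
    with \<open>\<eta> \<in> A\<close> show "\<eta> \<in> (\<Union>\<xi>\<in>(\<lambda>\<eta>. restrict \<eta> F) ` A. C \<xi>)" by blast
  next
    fix \<eta>' assume "\<eta>' \<in> (\<Union>\<xi>\<in>(\<lambda>\<eta>. restrict \<eta> F) ` A. C \<xi>)"
    then obtain \<eta> where "\<eta> \<in> A" "\<eta>' \<in> space Omega_E" "\<And>e. e \<in> F \<Longrightarrow> \<eta>' e = \<eta> e"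
      unfolding C_def by auto
    moreover from this have "G \<eta>' = G \<eta>" unfolding A_def by (intro depends_on_edgesD[OF G]) auto
    ultimately show "\<eta>' \<in> A" unfolding A_def by simp
  qed
  have "finite ((\<lambda>\<eta>. restrict \<eta> F) ` A)"
    using F by (intro finite_subset[OF _ finite_PiE[of F "\<lambda>_. UNIV :: bool set"]]) auto
  then have "(\<Union>\<xi>\<in>(\<lambda>\<eta>. restrict \<eta> F) ` A. C \<xi>) \<in> sets Omega_E"
    unfolding C_def using sets_cylinder[OF F] by (intro sets.finite_UN) auto
  then show ?thesis unfolding A_def[symmetric] using A_eq by simp
qed

lemma sets_depends_on_edges_indicator:
  assumes "finite F" "F \<subseteq> TE" "depends_on_edges F (indicator A :: _ \<Rightarrow> real)" "A \<subseteq> space Omega_E"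
  shows "A \<in> sets Omega_E"
proof -
  have "{\<eta> \<in> space Omega_E. indicator A \<eta> = (1::real)} = A"
    using assms(4) by (auto simp: indicator_eq_1_iff)
  then show ?thesis using depends_on_edges_sets[OF assms(1-3), of "\<lambda>x. x = 1"] by simp
qed

lemma finite_range_level_sum:
  fixes G :: "'a \<Rightarrow> real"
  assumes "finite Vals" "G x \<in> Vals"
  shows "G x = (\<Sum>y\<in>Vals. y * indicator {z. G z = y} x)"
proof -
  have "(\<Sum>y\<in>Vals. y * indicator {z. G z = y} x) = (\<Sum>y\<in>Vals. if y = G x then y else 0)"
    by (intro sum.cong) (auto simp: indicator_def)
  then show ?thesis using assms by (simp add: sum.delta')
qed

lemma integral_finite_range:
  fixes G :: "'a \<Rightarrow> real"
  assumes "finite_measure M" "finite Vals" "\<And>x. x \<in> space M \<Longrightarrow> G x \<in> Vals"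
    and levels: "\<And>y. {x \<in> space M. G x = y} \<in> sets M"
  shows "integral\<^sup>L M G = (\<Sum>y\<in>Vals. y * measure M {x \<in> space M. G x = y})"
proof -
  interpret finite_measure M by (rule assms(1))
  have level_sum: "G x = (\<Sum>y\<in>Vals. y * indicator {x \<in> space M. G x = y} x)" if "x \<in> space M" for x
    using finite_range_level_sum[of Vals G x] assms(2) assms(3)[OF that] that by (simp add: indicator_def)
  have "integral\<^sup>L M G = integral\<^sup>L M (\<lambda>x. \<Sum>y\<in>Vals. y * indicator {x \<in> space M. G x = y} x)"
    by (rule Bochner_Integration.integral_cong[OF refl level_sum])
  also have "\<dots> = (\<Sum>y\<in>Vals. integral\<^sup>L M (\<lambda>x. y * indicator {x \<in> space M. G x = y} x))"
    by (rule Bochner_Integration.integral_sum)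
      (intro integrable_mult_right integrable_real_indicator levels, simp add: less_top[symmetric])
  also have "\<dots> = (\<Sum>y\<in>Vals. y * measure M {x \<in> space M. G x = y})"
    by (simp add: Int_absorb2)
  finally show ?thesis .
qed

lemma borel_measurable_finite_range:
  fixes G :: "'a \<Rightarrow> real"
  assumes "finite Vals" "\<And>x. x \<in> space M \<Longrightarrow> G x \<in> Vals"
    and levels: "\<And>y. {x \<in> space M. G x = y} \<in> sets M"
  shows "G \<in> borel_measurable M"
proof -
  have "(\<lambda>x. \<Sum>y\<in>Vals. y * indicator {x \<in> space M. G x = y} x) \<in> borel_measurable M"
    using levels by measurable
  moreover have "G x = (\<Sum>y\<in>Vals. y * indicator {x \<in> space M. G x = y} x)" if "x \<in> space M" for x
    using finite_range_level_sum[of Vals G x] assms(1) assms(2)[OF that] that by (simp add: indicator_def)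
  ultimately show ?thesis by (metis (no_types, lifting) measurable_cong)
qed

definition fk_free_expectation :: "real \<Rightarrow> real \<Rightarrow> nat \<Rightarrow> ((edg \<Rightarrow> bool) \<Rightarrow> real) \<Rightarrow> real" where
  "fk_free_expectation p q n G = (\<Sum>X\<in>Pow (box_edges n). fk_weight p q n X * G (cfg X))
     / (\<Sum>X\<in>Pow (box_edges n). fk_weight p q n X)"

lemma fk_free_expectation_finite_range:
  fixes G :: "(edg \<Rightarrow> bool) \<Rightarrow> real"
  assumes "finite Vals" "\<And>\<eta>. \<eta> \<in> space Omega_E \<Longrightarrow> G \<eta> \<in> Vals"
  shows "fk_free_expectation p q n G = (\<Sum>y\<in>Vals. y * fk_free p q n {\<eta> \<in> space Omega_E. G \<eta> = y})"
proof -
  let ?w = "fk_weight p q n" and ?Z = "\<Sum>X\<in>Pow (box_edges n). fk_weight p q n X"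
  let ?L = "\<lambda>y. {\<eta> \<in> space Omega_E. G \<eta> = y}"
  have "(\<Sum>y\<in>Vals. y * (if cfg X \<in> ?L y then ?w X else 0))
      = (\<Sum>y\<in>Vals. if y = G (cfg X) then y * ?w X else 0)" for X
    using cfg_in_space[of X] by (intro sum.cong) auto
  then have "?w X * G (cfg X) = (\<Sum>y\<in>Vals. y * (if cfg X \<in> ?L y then ?w X else 0))" for X
    using assms(1) assms(2)[OF cfg_in_space] by (simp add: sum.delta')
  then have "fk_free_expectation p q n G
      = (\<Sum>y\<in>Vals. y * (\<Sum>X\<in>Pow (box_edges n). if cfg X \<in> ?L y then ?w X else 0)) / ?Z"
    unfolding fk_free_expectation_def by (simp add: sum_distrib_left sum.swap[of _ Vals])
  also have "\<dots> = (\<Sum>y\<in>Vals. y * ((\<Sum>X\<in>Pow (box_edges n). if cfg X \<in> ?L y then ?w X else 0) / ?Z))"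
    by (simp only: sum_divide_distrib[of _ Vals] times_divide_eq_right)
  finally show ?thesis unfolding fk_free_def .
qed

lemma fk_free_expectation_tendsto:
  fixes G :: "(edg \<Rightarrow> bool) \<Rightarrow> real"
  assumes lim: "FK_free_limit p q \<nu>"
    and F: "finite F" "F \<subseteq> TE" and G: "depends_on_edges F G"
    and Vals: "finite Vals" "\<And>\<eta>. \<eta> \<in> space Omega_E \<Longrightarrow> G \<eta> \<in> Vals"
  shows "(\<lambda>n. fk_free_expectation p q n G) \<longlonglongrightarrow> integral\<^sup>L \<nu> G"
proof -
  have "prob_space \<nu>" and sets: "sets \<nu> = sets Omega_E" using lim unfolding FK_free_limit_def by auto
  have space: "space \<nu> = space Omega_E" using sets by (rule sets_eq_imp_space_eq)
  let ?L = "\<lambda>y. {\<eta> \<in> space Omega_E. G \<eta> = y}"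
  have "(\<lambda>n. fk_free p q n (?L y)) \<longlonglongrightarrow> measure \<nu> (?L y)" for y
  proof -
    have "\<forall>\<eta>\<in>space Omega_E. \<forall>\<eta>'\<in>space Omega_E. (\<forall>e\<in>F. \<eta> e = \<eta>' e) \<longrightarrow> (\<eta> \<in> ?L y \<longleftrightarrow> \<eta>' \<in> ?L y)"
      using depends_on_edgesD[OF G] by blast
    then show ?thesis
      using lim F depends_on_edges_sets[OF F G, of "\<lambda>x. x = y"] unfolding FK_free_limit_def by blast
  qed
  then have "(\<lambda>n. \<Sum>y\<in>Vals. y * fk_free p q n (?L y)) \<longlonglongrightarrow> (\<Sum>y\<in>Vals. y * measure \<nu> (?L y))"
    by (intro tendsto_sum tendsto_mult_left)
  moreover have "integral\<^sup>L \<nu> G = (\<Sum>y\<in>Vals. y * measure \<nu> (?L y))"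
    using integral_finite_range[of \<nu> Vals G] Vals depends_on_edges_sets[OF F G] \<open>prob_space \<nu>\<close>
    unfolding space sets by (simp add: prob_space.finite_measure)
  ultimately show ?thesis by (simp add: fk_free_expectation_finite_range[OF Vals])
qed

section \<open>Integrating out the cluster spins\<close>


lemma rep_eq_iff_eventually_box_trunc:
  "eventually (\<lambda>m. rep (box_trunc m \<eta>) v = w) sequentially \<longleftrightarrow> rep \<eta> v = w"
proof
  assume "eventually (\<lambda>m. rep (box_trunc m \<eta>) v = w) sequentially"
  with rep_box_trunc_eventually[of \<eta> v] have "eventually (\<lambda>m. rep \<eta> v = w) sequentially"
    by eventually_elim simp
  then show "rep \<eta> v = w" by simp
next
  assume "rep \<eta> v = w"
  with rep_box_trunc_eventually[of \<eta> v] show "eventually (\<lambda>m. rep (box_trunc m \<eta>) v = w) sequentially"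
    by simp
qed

text \<open>rep \<eta> v may depend on infinitely many edges, but it is the eventual value of its box
  truncations, each of which depends on finitely many.\<close>
lemma measurable_rep: "(\<lambda>\<eta>. rep \<eta> v) \<in> measurable Omega_E (count_space UNIV)"
proof -
  have [measurable]: "Measurable.pred Omega_E (\<lambda>\<eta>. rep (box_trunc m \<eta>) v = w)" for m w
    using depends_on_edges_sets[OF finite_box_edges box_edges_subset_TE
        depends_on_edges_box_trunc[of m "\<lambda>\<eta>. rep \<eta> v"], of "\<lambda>x. x = w"]
    by (simp add: Measurable.pred_def)
  have eventually_level: "{\<eta> \<in> space Omega_E. \<exists>N. \<forall>m\<ge>N. rep (box_trunc m \<eta>) v = w}
      = (\<lambda>\<eta>. rep \<eta> v) -` {w} \<inter> space Omega_E" for w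
    unfolding eventually_sequentially[symmetric] rep_eq_iff_eventually_box_trunc by auto
  have "{\<eta> \<in> space Omega_E. \<exists>N. \<forall>m\<ge>N. rep (box_trunc m \<eta>) v = w} \<in> sets Omega_E" for w
    by measurable
  then have "(\<lambda>\<eta>. rep \<eta> v) -` {w} \<inter> space Omega_E \<in> sets Omega_E" for w
    by (simp only: eventually_level)
  then show ?thesis by (simp add: measurable_count_space_eq2_countable)
qed

text \<open>Given the edge configuration, c is the probability that a cluster receives the spin
  \<kappa>, so this is the conditional probability that all of V has spin \<kappa>.\<close>
definition cluster_weight :: "real \<Rightarrow> vtx set \<Rightarrow> (edg \<Rightarrow> bool) \<Rightarrow> real" where
  "cluster_weight c W \<eta> = c ^ card (rep \<eta> ` W)"

lemma cluster_weight_empty [simp]: "cluster_weight c {} \<eta> = 1"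
  unfolding cluster_weight_def by simp

lemma cluster_weight_nonneg: "0 \<le> c \<Longrightarrow> 0 \<le> cluster_weight c W \<eta>"
  unfolding cluster_weight_def by simp

lemma cluster_weight_le_1: "0 \<le> c \<Longrightarrow> c \<le> 1 \<Longrightarrow> cluster_weight c W \<eta> \<le> 1"
  unfolding cluster_weight_def by (simp add: power_le_one)

lemma cluster_weight_range: "finite W \<Longrightarrow> cluster_weight c W \<eta> \<in> (\<lambda>j. c ^ j) ` {..card W}"
  unfolding cluster_weight_def using card_image_le by auto

lemma cluster_weight_mono:
  assumes "0 \<le> c" "c \<le> 1" "finite W" "\<And>x. \<eta> x \<Longrightarrow> \<eta>' x"
  shows "cluster_weight c W \<eta> \<le> cluster_weight c W \<eta>'"
  unfolding cluster_weight_def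
  using assms card_rep_image_antimono[OF assms(3,4)] by (intro power_decreasing) auto

lemma borel_measurable_cluster_weight_box_trunc:
  assumes "finite W"
  shows "(\<lambda>\<eta>. cluster_weight c W (box_trunc m \<eta>)) \<in> borel_measurable Omega_E"
  using cluster_weight_range[OF assms] depends_on_edges_sets[OF finite_box_edges box_edges_subset_TE
      depends_on_edges_box_trunc[of m "cluster_weight c W"]]
  by (intro borel_measurable_finite_range[of "(\<lambda>j. c ^ j) ` {..card W}"]) auto

lemma cluster_weight_box_trunc_tendsto:
  assumes "finite W"
  shows "(\<lambda>m. cluster_weight c W (box_trunc m \<eta>)) \<longlonglongrightarrow> cluster_weight c W \<eta>"
proof (rule tendsto_eventually)
  have "eventually (\<lambda>m. \<forall>v\<in>W. rep (box_trunc m \<eta>) v = rep \<eta> v) sequentially"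
    using assms by (simp add: eventually_ball_finite rep_box_trunc_eventually)
  then show "eventually (\<lambda>m. cluster_weight c W (box_trunc m \<eta>) = cluster_weight c W \<eta>) sequentially"
    unfolding cluster_weight_def by eventually_elim (metis image_cong)
qed

lemma borel_measurable_cluster_weight: "finite W \<Longrightarrow> cluster_weight c W \<in> borel_measurable Omega_E"
  by (rule borel_measurable_LIMSEQ_real[OF cluster_weight_box_trunc_tendsto
        borel_measurable_cluster_weight_box_trunc])

definition spin_product :: "real \<Rightarrow> (vtx \<Rightarrow> int) measure" where
  "spin_product r = (\<Pi>\<^sub>M v\<in>(UNIV :: vtx set). measure_pmf (spin_pmf r))"

definition joint_space :: "((edg \<Rightarrow> bool) \<times> (vtx \<Rightarrow> int)) measure" where
  "joint_space = Omega_E \<Otimes>\<^sub>M (\<Pi>\<^sub>M v\<in>(UNIV :: vtx set). count_space (UNIV :: int set))"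

definition spread_spins :: "(edg \<Rightarrow> bool) \<times> (vtx \<Rightarrow> int) \<Rightarrow> (edg \<Rightarrow> bool) \<times> (vtx \<Rightarrow> int)" where
  "spread_spins = (\<lambda>(\<eta>, \<tau>). (\<eta>, \<lambda>v. \<tau> (rep \<eta> v)))"

lemma P_joint_eq_distr: "P_joint \<nu> r = distr (\<nu> \<Otimes>\<^sub>M spin_product r) joint_space spread_spins"
  unfolding P_joint_def spin_product_def joint_space_def spread_spins_def ..

lemma space_P_joint: "space (P_joint \<nu> r) = space joint_space"
  unfolding P_joint_eq_distr by simp

lemma prob_space_spin_product: "prob_space (spin_product r)"
  unfolding spin_product_def by (rule prob_space_PiM) (rule prob_space_measure_pmf)

lemma space_spin_product: "space (spin_product r) = UNIV"
  unfolding spin_product_def by (simp add: space_PiM PiE_def extensional_def)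

lemma restrict_eq_const_iff: "restrict x R = (\<lambda>w\<in>R. k) \<longleftrightarrow> (\<forall>w\<in>R. x w = k)"
  by (metis restrict_apply' restrict_ext)

lemma emeasure_spin_product_const:
  assumes "finite R"
  shows "emeasure (spin_product r) {\<tau> \<in> space (spin_product r). \<forall>w\<in>R. \<tau> w = \<kappa>}
       = ennreal (pmf (spin_pmf r) \<kappa> ^ card R)"
proof -
  have "{\<tau> \<in> space (spin_product r). \<forall>w\<in>R. \<tau> w = \<kappa>}
      = prod_emb UNIV (\<lambda>_. measure_pmf (spin_pmf r)) R (\<Pi>\<^sub>E w\<in>R. {\<kappa>})"
    unfolding prod_emb_def space_spin_product by (auto simp: PiE_def extensional_def restrict_eq_const_iff)
  also have "emeasure (spin_product r) \<dots> = (\<Prod>w\<in>R. emeasure (measure_pmf (spin_pmf r)) {\<kappa>})"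
    unfolding spin_product_def by (rule emeasure_PiM_emb) (auto simp: assms prob_space_measure_pmf)
  also have "\<dots> = ennreal (pmf (spin_pmf r) \<kappa> ^ card R)"
    by (simp add: emeasure_pmf_single ennreal_power)
  finally show ?thesis .
qed

lemma measurable_spread_spins:
  assumes sets: "sets \<nu> = sets Omega_E"
  shows "spread_spins \<in> measurable (\<nu> \<Otimes>\<^sub>M spin_product r) joint_space"
proof -
  have fst: "fst \<in> measurable (\<nu> \<Otimes>\<^sub>M spin_product r) Omega_E"
    using measurable_fst[of \<nu> "spin_product r"] by (subst (asm) measurable_cong_sets[OF refl sets])
  have spin: "(\<lambda>x. snd x w) \<in> measurable (\<nu> \<Otimes>\<^sub>M spin_product r) (count_space UNIV)" for w :: vtx
  proof -
    have "(\<lambda>\<tau>. \<tau> w) \<in> measurable (spin_product r) (measure_pmf (spin_pmf r))"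
      unfolding spin_product_def by (rule measurable_component_singleton) simp
    then have "(\<lambda>\<tau>. \<tau> w) \<in> measurable (spin_product r) (count_space UNIV)"
      using measurable_cong_sets[OF refl sets_measure_pmf_count_space] by simp
    then show ?thesis by (rule measurable_compose[OF measurable_snd])
  qed
  have "(\<lambda>x. snd x (rep (fst x) v)) \<in> measurable (\<nu> \<Otimes>\<^sub>M spin_product r) (count_space UNIV)" for v
    using measurable_compose_countable[where f = "\<lambda>w x. snd x w" and g = "\<lambda>x. rep (fst x) v", OF spin
        measurable_compose[OF fst measurable_rep]] .
  then have "(\<lambda>x. (fst x, \<lambda>v. snd x (rep (fst x) v))) \<in> measurable (\<nu> \<Otimes>\<^sub>M spin_product r) joint_space"
    unfolding joint_space_def by (intro measurable_Pair[OF fst] measurable_PiM_single') auto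
  moreover have "spread_spins = (\<lambda>x. (fst x, \<lambda>v. snd x (rep (fst x) v)))"
    unfolding spread_spins_def by (auto simp: fun_eq_iff split: prod.splits)
  ultimately show ?thesis by simp
qed

definition joint_event :: "(edg \<Rightarrow> bool) set \<Rightarrow> vtx set \<Rightarrow> int \<Rightarrow> ((edg \<Rightarrow> bool) \<times> (vtx \<Rightarrow> int)) set" where
  "joint_event B W \<kappa> = {\<omega> \<in> space joint_space. fst \<omega> \<in> B \<and> (\<forall>v\<in>W. snd \<omega> v = \<kappa>)}"

lemma sets_joint_event:
  assumes "B \<in> sets Omega_E" "finite W"
  shows "joint_event B W \<kappa> \<in> sets joint_space"
proof -
  have "(\<lambda>\<omega>. snd \<omega> v) \<in> measurable joint_space (count_space UNIV)" for v
    unfolding joint_space_def by (rule measurable_compose[OF measurable_snd measurable_component_singleton]) simp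
  then have [measurable]: "Measurable.pred joint_space (\<lambda>\<omega>. snd \<omega> v = \<kappa>)" for v
    by measurable
  have [measurable]: "Measurable.pred joint_space (\<lambda>\<omega>. fst \<omega> \<in> B)"
    using assms(1) unfolding joint_space_def by measurable
  show ?thesis unfolding joint_event_def using assms(2) by measurable
qed

text \<open>Given \<eta>, the event needs the spins of the clusters met by W, i.e. of the
  representatives rep \<eta> ` W, to equal \<kappa>.\<close>
lemma emeasure_spread_spins_slice:
  assumes sets: "sets \<nu> = sets Omega_E" and "\<eta> \<in> space \<nu>" and W: "finite W"
  shows "emeasure (spin_product r)
           (Pair \<eta> -` (spread_spins -` joint_event B W \<kappa> \<inter> space (\<nu> \<Otimes>\<^sub>M spin_product r)))
       = ennreal (indicator B \<eta> * cluster_weight (pmf (spin_pmf r) \<kappa>) W \<eta>)"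
proof -
  have "Pair \<eta> -` (spread_spins -` joint_event B W \<kappa> \<inter> space (\<nu> \<Otimes>\<^sub>M spin_product r))
      = (if \<eta> \<in> B then {\<tau> \<in> space (spin_product r). \<forall>w\<in>rep \<eta> ` W. \<tau> w = \<kappa>} else {})"
    using assms(2) measurable_space[OF measurable_spread_spins[OF sets], of "(\<eta>, _)"]
    unfolding joint_event_def spread_spins_def
    by (auto simp: space_pair_measure space_spin_product)
  then show ?thesis
    using emeasure_spin_product_const[of "rep \<eta> ` W" r \<kappa>] W by (simp add: cluster_weight_def)
qed

lemma measure_P_joint_event:
  assumes sets: "sets \<nu> = sets Omega_E" and "prob_space \<nu>"
    and B: "B \<in> sets Omega_E" and W: "finite W"
  shows "measure (P_joint \<nu> r) (joint_event B W \<kappa>)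
       = integral\<^sup>L \<nu> (\<lambda>\<eta>. indicator B \<eta> * cluster_weight (pmf (spin_pmf r) \<kappa>) W \<eta>)"
proof -
  interpret spins: prob_space "spin_product r" by (rule prob_space_spin_product)
  interpret prob_space \<nu> by fact
  let ?c = "pmf (spin_pmf r) \<kappa>" and ?T = "\<nu> \<Otimes>\<^sub>M spin_product r"
  define Y where "Y = spread_spins -` joint_event B W \<kappa> \<inter> space ?T"
  have measurable: "spread_spins \<in> measurable ?T joint_space"
    by (rule measurable_spread_spins[OF sets])
  have "Y \<in> sets ?T" unfolding Y_def by (rule measurable_sets[OF measurable sets_joint_event[OF B W]])
  then have "emeasure ?T Y = (\<integral>\<^sup>+\<eta>. emeasure (spin_product r) (Pair \<eta> -` Y) \<partial>\<nu>)"
    by (rule spins.emeasure_pair_measure_alt)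
  also have "\<dots> = (\<integral>\<^sup>+\<eta>. ennreal (indicator B \<eta> * cluster_weight ?c W \<eta>) \<partial>\<nu>)"
    unfolding Y_def using emeasure_spread_spins_slice[OF sets _ W] by (intro nn_integral_cong) simp
  finally have "measure ?T Y = enn2real (\<integral>\<^sup>+\<eta>. ennreal (indicator B \<eta> * cluster_weight ?c W \<eta>) \<partial>\<nu>)"
    by (simp add: measure_def)
  also have "\<dots> = integral\<^sup>L \<nu> (\<lambda>\<eta>. indicator B \<eta> * cluster_weight ?c W \<eta>)"
  proof (rule enn2real_nn_integral_eq_integral)
    have "(\<lambda>\<eta>. indicator B \<eta> * cluster_weight ?c W \<eta>) \<in> borel_measurable Omega_E"
      using B borel_measurable_cluster_weight[OF W] by measurable
    then show "(\<lambda>\<eta>. indicator B \<eta> * cluster_weight ?c W \<eta>) \<in> borel_measurable \<nu>"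
      by (simp add: measurable_cong_sets[OF sets refl])
  qed (simp_all add: cluster_weight_nonneg)
  finally show ?thesis
    unfolding P_joint_eq_distr Y_def by (simp add: measure_distr[OF measurable sets_joint_event[OF B W]])
qed


definition edge_event :: "edg set \<Rightarrow> (edg \<Rightarrow> bool) \<Rightarrow> (edg \<Rightarrow> bool) set" where
  "edge_event E s = {\<eta> \<in> space Omega_E. \<forall>i\<in>E. \<eta> i = s i}"

definition open_edge :: "edg \<Rightarrow> (edg \<Rightarrow> bool) set" where
  "open_edge e = {\<eta> \<in> space Omega_E. \<eta> e}"

definition edge_increasing :: "((edg \<Rightarrow> bool) \<Rightarrow> real) \<Rightarrow> bool" where
  "edge_increasing f \<longleftrightarrow>
     (\<forall>\<eta>\<in>space Omega_E. \<forall>\<eta>'\<in>space Omega_E. (\<forall>x. \<eta> x \<longrightarrow> \<eta>' x) \<longrightarrow> f \<eta> \<le> f \<eta>')"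

lemma cfg_Un: "cfg (A \<union> B) i = (cfg A i \<or> cfg B i)"
  unfolding cfg_def by auto

lemma cfg_Int: "cfg (A \<inter> B) i = (cfg A i \<and> cfg B i)"
  unfolding cfg_def by auto

lemma cfg_mono: "A \<subseteq> B \<Longrightarrow> cfg A x \<Longrightarrow> cfg B x"
  unfolding cfg_def by (auto split: if_splits)

lemma cfg_in_edge_event_Un_Int:
  assumes "\<forall>i\<in>E. s i \<longrightarrow> g i" "cfg A \<in> edge_event E s" "cfg B \<in> edge_event E g"
  shows "cfg (A \<union> B) \<in> edge_event E g" "cfg (A \<inter> B) \<in> edge_event E s"
  using assms cfg_in_space unfolding edge_event_def by (auto simp: cfg_Un cfg_Int)

lemma fk_free_expectation_indicator_mult:
  "fk_free_expectation p q n (\<lambda>\<eta>. indicator B \<eta> * H \<eta>)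
     = (\<Sum>X\<in>Pow (box_edges n). (if cfg X \<in> B then fk_weight p q n X else 0) * H (cfg X))
       / (\<Sum>X\<in>Pow (box_edges n). fk_weight p q n X)"
  unfolding fk_free_expectation_def by (intro arg_cong2[where f = "(/)"] sum.cong) auto

lemma fk_weight_edge_event_dominated:
  assumes p: "0 \<le> p" "p \<le> 1" and q: "1 \<le> q" and AB: "A \<subseteq> box_edges n" "B \<subseteq> box_edges n"
    and sg: "\<forall>i\<in>E. s i \<longrightarrow> g i"
  shows "(if cfg A \<in> edge_event E s then fk_weight p q n A else 0)
         * (if cfg B \<in> edge_event E g then fk_weight p q n B else 0)
       \<le> (if cfg (A \<union> B) \<in> edge_event E g then fk_weight p q n (A \<union> B) else 0)
         * (if cfg (A \<inter> B) \<in> edge_event E s then fk_weight p q n (A \<inter> B) else 0)"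
  using cfg_in_edge_event_Un_Int[OF sg, of A B] fk_weight_log_supermodular[OF p q AB]
    fk_weight_nonneg[of p q n] p q
  by (auto simp: mult_nonneg_nonneg)

lemma fk_free_expectation_holley_fkg:
  assumes p: "0 \<le> p" "p \<le> 1" and q: "1 \<le> q" and sg: "\<forall>i\<in>E. s i \<longrightarrow> g i"
    and f: "edge_increasing f" "\<And>\<eta>. \<eta> \<in> space Omega_E \<Longrightarrow> 0 \<le> f \<eta>"
    and h: "edge_increasing h" "\<And>\<eta>. \<eta> \<in> space Omega_E \<Longrightarrow> 0 \<le> h \<eta>"
  shows "fk_free_expectation p q n (\<lambda>\<eta>. indicator (edge_event E s) \<eta> * f \<eta>)
       * fk_free_expectation p q n (\<lambda>\<eta>. indicator (edge_event E g) \<eta> * h \<eta>)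
     \<le> fk_free_expectation p q n (\<lambda>\<eta>. indicator (edge_event E g) \<eta> * (f \<eta> * h \<eta>))
       * fk_free_expectation p q n (\<lambda>\<eta>. indicator (edge_event E s) \<eta> * 1)"
proof -
  let ?w = "fk_weight p q n"
  define ms where "ms X = (if cfg X \<in> edge_event E s then ?w X else 0)" for X
  define mg where "mg X = (if cfg X \<in> edge_event E g then ?w X else 0)" for X
  have "0 \<le> ?w X" for X using p q by (intro fk_weight_nonneg) auto
  then have nonneg: "0 \<le> ms X" "0 \<le> mg X" for X unfolding ms_def mg_def by auto
  have increasing: "F (cfg A) \<le> F (cfg B)" if "edge_increasing F" "A \<subseteq> B" for F A B
    using that cfg_in_space cfg_mono unfolding edge_increasing_def by blast
  have "(\<Sum>X\<in>Pow (box_edges n). ms X * f (cfg X)) * (\<Sum>X\<in>Pow (box_edges n). mg X * h (cfg X))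
      \<le> (\<Sum>X\<in>Pow (box_edges n). mg X * f (cfg X) * h (cfg X)) * (\<Sum>X\<in>Pow (box_edges n). ms X)"
  proof (rule holley_fkg_sums[OF finite_box_edges])
    show "ms A * mg B \<le> mg (A \<union> B) * ms (A \<inter> B)" if "A \<subseteq> box_edges n" "B \<subseteq> box_edges n" for A B
      unfolding ms_def mg_def by (rule fk_weight_edge_event_dominated[OF p q that sg])
    show "mg A * mg B \<le> mg (A \<union> B) * mg (A \<inter> B)" if "A \<subseteq> box_edges n" "B \<subseteq> box_edges n" for A B
      unfolding mg_def by (rule fk_weight_edge_event_dominated[OF p q that]) simp
  qed (use nonneg f h increasing cfg_in_space in auto)
  then show ?thesis
    unfolding fk_free_expectation_indicator_mult ms_def[symmetric] mg_def[symmetric]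
    by (simp add: divide_right_mono mult_ac)
qed

lemma depends_on_edges_edge_event: "E \<subseteq> F \<Longrightarrow> depends_on_edges F (indicator (edge_event E s) :: _ \<Rightarrow> real)"
  unfolding edge_event_def by (intro depends_on_edges_indicator) auto

lemma depends_on_edges_open_edge_Int:
  assumes "e \<in> F" "E \<subseteq> F"
  shows "depends_on_edges F (indicator (open_edge e \<inter> edge_event E s) :: _ \<Rightarrow> real)"
proof -
  have "open_edge e \<inter> edge_event E s = {\<eta> \<in> space Omega_E. \<eta> e \<and> (\<forall>i\<in>E. \<eta> i = s i)}"
    unfolding edge_event_def open_edge_def by auto
  then show "depends_on_edges F (indicator (open_edge e \<inter> edge_event E s) :: _ \<Rightarrow> real)"
    using assms by (simp only:) (intro depends_on_edges_indicator; auto)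
qed

lemma sets_edge_event: "finite E \<Longrightarrow> E \<subseteq> TE \<Longrightarrow> edge_event E s \<in> sets Omega_E"
  by (rule sets_depends_on_edges_indicator[of E, OF _ _ depends_on_edges_edge_event])
    (auto simp: edge_event_def)

lemma sets_open_edge_Int:
  "finite E \<Longrightarrow> E \<subseteq> TE \<Longrightarrow> e \<in> TE \<Longrightarrow> open_edge e \<inter> edge_event E s \<in> sets Omega_E"
  by (rule sets_depends_on_edges_indicator[of "insert e E", OF _ _ depends_on_edges_open_edge_Int])
    (auto simp: edge_event_def)

lemma fk_free_expectation_cluster_weight_tendsto:
  assumes lim: "FK_free_limit p q \<nu>" and F: "finite F" "F \<subseteq> TE"
    and A: "depends_on_edges F (indicator A :: _ \<Rightarrow> real)" and W: "finite W"
  shows "(\<lambda>n. fk_free_expectation p q n (\<lambda>\<eta>. indicator A \<eta> * cluster_weight c W (box_trunc m \<eta>)))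
       \<longlonglongrightarrow> integral\<^sup>L \<nu> (\<lambda>\<eta>. indicator A \<eta> * cluster_weight c W (box_trunc m \<eta>))"
proof (rule fk_free_expectation_tendsto[OF lim])
  show "finite (F \<union> box_edges m)" "F \<union> box_edges m \<subseteq> TE"
    using F finite_box_edges box_edges_subset_TE by auto
  show "depends_on_edges (F \<union> box_edges m) (\<lambda>\<eta>. indicator A \<eta> * cluster_weight c W (box_trunc m \<eta>))"
    using A depends_on_edges_box_trunc
    by (intro depends_on_edges_mult) (auto intro: depends_on_edges_mono[rotated])
  show "indicator A \<eta> * cluster_weight c W (box_trunc m \<eta>) \<in> insert 0 ((\<lambda>j. c ^ j) ` {..card W})" for \<eta>
    using cluster_weight_range[OF W] by (auto simp: indicator_def)
qed simp

lemma integral_cluster_weight_box_trunc_tendsto: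
  assumes "prob_space \<nu>" and sets: "sets \<nu> = sets Omega_E" and "A \<in> sets Omega_E"
    and c: "0 \<le> c" "c \<le> 1" and W: "finite W"
  shows "(\<lambda>m. integral\<^sup>L \<nu> (\<lambda>\<eta>. indicator A \<eta> * cluster_weight c W (box_trunc m \<eta>)))
       \<longlonglongrightarrow> integral\<^sup>L \<nu> (\<lambda>\<eta>. indicator A \<eta> * cluster_weight c W \<eta>)"
proof (rule integral_dominated_convergence[where w = "\<lambda>_. 1"])
  interpret prob_space \<nu> by fact
  have [measurable]: "A \<in> sets \<nu>" using assms(3) sets by simp
  have [measurable]: "cluster_weight c W \<in> borel_measurable \<nu>"
    "(\<lambda>\<eta>. cluster_weight c W (box_trunc m \<eta>)) \<in> borel_measurable \<nu>" for m
    using borel_measurable_cluster_weight[OF W] borel_measurable_cluster_weight_box_trunc[OF W]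
    by (simp_all add: measurable_cong_sets[OF sets refl])
  show "(\<lambda>\<eta>. indicator A \<eta> * cluster_weight c W \<eta>) \<in> borel_measurable \<nu>"
    "(\<lambda>\<eta>. indicator A \<eta> * cluster_weight c W (box_trunc m \<eta>)) \<in> borel_measurable \<nu>" for m
    by measurable
  show "integrable \<nu> (\<lambda>_. 1::real)" by simp
  show "AE \<eta> in \<nu>. (\<lambda>m. indicator A \<eta> * cluster_weight c W (box_trunc m \<eta>))
      \<longlonglongrightarrow> indicator A \<eta> * cluster_weight c W \<eta>"
    by (intro AE_I2 tendsto_mult_left cluster_weight_box_trunc_tendsto[OF W])
  show "AE \<eta> in \<nu>. norm (indicator A \<eta> * cluster_weight c W (box_trunc m \<eta>)) \<le> 1" for m
    using cluster_weight_nonneg[OF c(1)] cluster_weight_le_1[OF c] by (intro AE_I2) (auto simp: indicator_def)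
qed

lemma fk_limit_holley_box_trunc:
  assumes lim: "FK_free_limit p q \<nu>" and p: "0 \<le> p" "p \<le> 1" and q: "1 \<le> q"
    and c: "0 \<le> c" "c \<le> 1" and V: "finite V"
    and E: "finite E" "E \<subseteq> TE" and e: "e \<in> TE" and sg: "\<forall>i\<in>E. s i \<longrightarrow> g i"
  defines "As \<equiv> edge_event E s" and "Ag \<equiv> edge_event E g"
  shows "integral\<^sup>L \<nu> (indicator (open_edge e \<inter> As))
         * integral\<^sup>L \<nu> (\<lambda>\<eta>. indicator Ag \<eta> * cluster_weight c V (box_trunc m \<eta>))
       \<le> integral\<^sup>L \<nu> (\<lambda>\<eta>. indicator (open_edge e \<inter> Ag) \<eta> * cluster_weight c V (box_trunc m \<eta>))
         * integral\<^sup>L \<nu> (indicator As)"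
proof (rule tendsto_le[OF trivial_limit_sequentially])
  define F where "F = insert e E"
  have F: "finite F" "F \<subseteq> TE" and "e \<in> F" "E \<subseteq> F" using E e unfolding F_def by auto
  let ?E = "\<lambda>n A W. fk_free_expectation p q n (\<lambda>\<eta>. indicator A \<eta> * cluster_weight c W (box_trunc m \<eta>))"
  have dep: "depends_on_edges F (indicator As :: _ \<Rightarrow> real)" "depends_on_edges F (indicator Ag :: _ \<Rightarrow> real)"
    "depends_on_edges F (indicator (open_edge e \<inter> As) :: _ \<Rightarrow> real)"
    "depends_on_edges F (indicator (open_edge e \<inter> Ag) :: _ \<Rightarrow> real)"
    unfolding As_def Ag_def using \<open>e \<in> F\<close> \<open>E \<subseteq> F\<close>
    by (auto intro: depends_on_edges_edge_event depends_on_edges_open_edge_Int)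
  show "(\<lambda>n. ?E n (open_edge e \<inter> Ag) V * ?E n As {}) \<longlonglongrightarrow>
      integral\<^sup>L \<nu> (\<lambda>\<eta>. indicator (open_edge e \<inter> Ag) \<eta> * cluster_weight c V (box_trunc m \<eta>))
      * integral\<^sup>L \<nu> (indicator As)"
    "(\<lambda>n. ?E n (open_edge e \<inter> As) {} * ?E n Ag V) \<longlonglongrightarrow>
      integral\<^sup>L \<nu> (indicator (open_edge e \<inter> As))
      * integral\<^sup>L \<nu> (\<lambda>\<eta>. indicator Ag \<eta> * cluster_weight c V (box_trunc m \<eta>))"
    using fk_free_expectation_cluster_weight_tendsto[OF lim F dep(1), of "{}"]
      fk_free_expectation_cluster_weight_tendsto[OF lim F dep(2) V]
      fk_free_expectation_cluster_weight_tendsto[OF lim F dep(3), of "{}"]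
      fk_free_expectation_cluster_weight_tendsto[OF lim F dep(4) V]
    by (auto intro!: tendsto_mult simp: fun_eq_iff)
  have incr: "edge_increasing (indicator (open_edge e))"
    unfolding edge_increasing_def open_edge_def by (auto simp: indicator_def)
  have incr_weight: "edge_increasing (\<lambda>\<eta>. cluster_weight c V (box_trunc m \<eta>))"
    unfolding edge_increasing_def box_trunc_def by (intro ballI impI cluster_weight_mono[OF c V]) auto
  have "?E n (open_edge e \<inter> As) {} * ?E n Ag V \<le> ?E n (open_edge e \<inter> Ag) V * ?E n As {}" for n
    using fk_free_expectation_holley_fkg[OF p q sg incr _ incr_weight] cluster_weight_nonneg[OF c(1)]
    by (simp add: As_def Ag_def indicator_inter_arith mult_ac)
  then show "eventually (\<lambda>n. ?E n (open_edge e \<inter> As) {} * ?E n Ag V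
      \<le> ?E n (open_edge e \<inter> Ag) V * ?E n As {}) sequentially"
    by simp
qed

lemma fk_limit_holley_cluster_weight:
  assumes lim: "FK_free_limit p q \<nu>" and p: "0 \<le> p" "p \<le> 1" and q: "1 \<le> q"
    and c: "0 \<le> c" "c \<le> 1" and V: "finite V"
    and E: "finite E" "E \<subseteq> TE" and e: "e \<in> TE" and sg: "\<forall>i\<in>E. s i \<longrightarrow> g i"
  defines "As \<equiv> edge_event E s" and "Ag \<equiv> edge_event E g"
  shows "integral\<^sup>L \<nu> (indicator (open_edge e \<inter> As))
         * integral\<^sup>L \<nu> (\<lambda>\<eta>. indicator Ag \<eta> * cluster_weight c V \<eta>)
       \<le> integral\<^sup>L \<nu> (\<lambda>\<eta>. indicator (open_edge e \<inter> Ag) \<eta> * cluster_weight c V \<eta>)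
         * integral\<^sup>L \<nu> (indicator As)"
proof -
  have "prob_space \<nu>" and sets: "sets \<nu> = sets Omega_E" using lim unfolding FK_free_limit_def by auto
  have "Ag \<in> sets Omega_E" "open_edge e \<inter> Ag \<in> sets Omega_E"
    unfolding Ag_def using E e by (auto intro: sets_edge_event sets_open_edge_Int)
  then have limits:
    "(\<lambda>m. integral\<^sup>L \<nu> (\<lambda>\<eta>. indicator Ag \<eta> * cluster_weight c V (box_trunc m \<eta>)))
       \<longlonglongrightarrow> integral\<^sup>L \<nu> (\<lambda>\<eta>. indicator Ag \<eta> * cluster_weight c V \<eta>)"
    "(\<lambda>m. integral\<^sup>L \<nu> (\<lambda>\<eta>. indicator (open_edge e \<inter> Ag) \<eta> * cluster_weight c V (box_trunc m \<eta>)))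
       \<longlonglongrightarrow> integral\<^sup>L \<nu> (\<lambda>\<eta>. indicator (open_edge e \<inter> Ag) \<eta> * cluster_weight c V \<eta>)"
    by (auto intro: integral_cluster_weight_box_trunc_tendsto[OF \<open>prob_space \<nu>\<close> sets _ c V])
  show ?thesis
    by (rule tendsto_le[OF trivial_limit_sequentially tendsto_mult[OF limits(2) tendsto_const]
          tendsto_mult[OF tendsto_const limits(1)] always_eventually])
      (use fk_limit_holley_box_trunc[OF assms(1-11)] in \<open>simp add: As_def Ag_def\<close>)
qed

lemma divide_le_divide_of_cross_le:
  fixes a b x y :: real
  assumes "x * b \<le> a * y" "0 < b" "0 \<le> a" "0 \<le> y"
  shows "x / y \<le> a / b"
proof (cases "y = 0")
  case True
  \<comment> \<open>Then the left-hand side is x / 0 = 0.\<close>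
  with assms show ?thesis by simp
next
  case False
  with assms show ?thesis by (simp add: divide_le_eq le_divide_eq mult_ac)
qed


theorem lemma4p1:
  fixes \<beta> r :: real and \<nu> :: "(edg \<Rightarrow> bool) measure" and V :: "vtx set" and \<kappa> :: int
    and E :: "edg set" and s g :: "edg \<Rightarrow> bool" and e :: edg
    and P :: "((edg \<Rightarrow> bool) \<times> (vtx \<Rightarrow> int)) measure"
    and I As Ag Open :: "((edg \<Rightarrow> bool) \<times> (vtx \<Rightarrow> int)) set"
  assumes "0 \<le> \<beta>" and "\<beta> < beta_c" and "0 \<le> r" and "r \<le> 1"
    and "FK_free_limit (1 - exp (- \<beta>)) 2 \<nu>"
    and "finite V" and "V \<noteq> {}" and "\<kappa> \<in> {-1, 1}"
    and "finite E" and "E \<subseteq> TE" and "\<forall>i\<in>E. s i \<longrightarrow> g i"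
    and "e \<in> TE - E"
  defines "P \<equiv> P_joint \<nu> r"
    and "I \<equiv> {\<omega> \<in> space P. \<forall>v\<in>V. snd \<omega> v = \<kappa>}"
    and "As \<equiv> {\<omega> \<in> space P. \<forall>i\<in>E. fst \<omega> i = s i}"
    and "Ag \<equiv> {\<omega> \<in> space P. \<forall>i\<in>E. fst \<omega> i = g i}"
    and "Open \<equiv> {\<omega> \<in> space P. fst \<omega> e}"
  assumes "measure P (Ag \<inter> I) > 0"
  shows "measure P (Open \<inter> Ag \<inter> I) / measure P (Ag \<inter> I) \<ge> measure P (Open \<inter> As) / measure P As"
proof -
  have lim: "FK_free_limit (1 - exp (- \<beta>)) 2 \<nu>" by fact
  then have \<nu>: "sets \<nu> = sets Omega_E" "prob_space \<nu>" unfolding FK_free_limit_def by auto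
  let ?c = "pmf (spin_pmf r) \<kappa>"
  have "\<omega> \<in> space P \<Longrightarrow> fst \<omega> \<in> space Omega_E" for \<omega>
    unfolding P_def space_P_joint joint_space_def by (auto simp: space_pair_measure)
  then have "Open \<inter> Ag \<inter> I = joint_event (open_edge e \<inter> edge_event E g) V \<kappa>"
    "Ag \<inter> I = joint_event (edge_event E g) V \<kappa>"
    "Open \<inter> As = joint_event (open_edge e \<inter> edge_event E s) {} \<kappa>"
    "As = joint_event (edge_event E s) {} \<kappa>"
    unfolding Open_def Ag_def As_def I_def joint_event_def open_edge_def edge_event_def P_def space_P_joint
    by auto
  moreover have "edge_event E s' \<in> sets Omega_E" "open_edge e \<inter> edge_event E s' \<in> sets Omega_E" for s'
    using \<open>finite E\<close> \<open>E \<subseteq> TE\<close> \<open>e \<in> TE - E\<close> by (auto intro: sets_edge_event sets_open_edge_Int)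
  ultimately have measures:
    "measure P (Open \<inter> Ag \<inter> I)
       = integral\<^sup>L \<nu> (\<lambda>\<eta>. indicator (open_edge e \<inter> edge_event E g) \<eta> * cluster_weight ?c V \<eta>)"
    "measure P (Ag \<inter> I) = integral\<^sup>L \<nu> (\<lambda>\<eta>. indicator (edge_event E g) \<eta> * cluster_weight ?c V \<eta>)"
    "measure P (Open \<inter> As) = integral\<^sup>L \<nu> (indicator (open_edge e \<inter> edge_event E s))"
    "measure P As = integral\<^sup>L \<nu> (indicator (edge_event E s))"
    unfolding P_def using measure_P_joint_event[OF \<nu>] \<open>finite V\<close> by simp_all
  have cross:
    "measure P (Open \<inter> As) * measure P (Ag \<inter> I) \<le> measure P (Open \<inter> Ag \<inter> I) * measure P As"
    unfolding measures
    using \<open>0 \<le> \<beta>\<close> \<open>finite V\<close> \<open>finite E\<close> \<open>E \<subseteq> TE\<close> \<open>e \<in> TE - E\<close> \<open>\<forall>i\<in>E. s i \<longrightarrow> g i\<close>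
    by (intro fk_limit_holley_cluster_weight[OF lim]) (auto simp: pmf_le_1)
  then show ?thesis
    using \<open>measure P (Ag \<inter> I) > 0\<close> by (intro divide_le_divide_of_cross_le) simp_all
qed

end
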